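(* For every integer $m\ge 0$ and $n\ge 0$, $$x^n=\sum_{k=0}^{\lfloor n/2\rfloor}(-s)^k\frac{[n]!}{[k]!\,[n-2k]!}\,\frac{[n+m-2k]!}{[n+m-k]!}\,l_{n-2k}(x,m,s,q).$$ Consequently, if $\Lambda_{m,q}$ is the linear functional on polynomials in $x$ determined by $\Lambda_{m,q}\big(l_n(x,m,-q^m,q)\big)=[n=0]$ for all $n\ge0$, then $\Lambda_{m,q}(x^{2n+1})=0$ and $$\Lambda_{m,q}(x^{2n})=q^{mn}\,\frac{[2n]!\,[m]!}{[n]!\,[m+n]!}\quad (n\ge 0).$$
   Context: $q$ is an indeterminate; $[n]=\frac{1-q^n}{1-q}$, $[n]!=[1][2]\cdots[n]$, $[0]!=1$. For an integer $m\ge0$ and indeterminates $x,s$, $$l_n(x,m,s,q)=\sum_{k=0}^{\lfloor n/2\rfloor}s^k q^{\binom k2}\frac{[n]!}{[k]!\,[n-2k]!}\,\frac{[m+n-k-1]!}{[m+n-1]!}\,x^{n-2k}\quad (n\ge1),\qquad l_0(x,m,s,q)=1.$$ $[P]$ is the Iverson bracket. *)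

theory Defs
  imports "HOL-Computational_Algebra.Polynomial"
begin

definition qint :: "'a::field \<Rightarrow> nat \<Rightarrow> 'a" where
  "qint q n = (1 - q ^ n) / (1 - q)"

definition qfact :: "'a::field \<Rightarrow> nat \<Rightarrow> 'a" where
  "qfact q n = (\<Prod>i\<in>{1..n}. qint q i)"

definition lpoly :: "'a::field \<Rightarrow> nat \<Rightarrow> 'a \<Rightarrow> nat \<Rightarrow> 'a poly" where
  "lpoly q m s n =
     (if n = 0 then 1
      else (\<Sum>k\<in>{0..n div 2}.
              smult (s ^ k * q ^ (k choose 2) * qfact q n / (qfact q k * qfact q (n - 2 * k))
                     * qfact q (m + n - k - 1) / qfact q (m + n - 1))
                    (monom 1 (n - 2 * k))))"

end

theory Submission
  imports Defs
begin

text \<open>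
  Both sides of the expansion of \<open>x\<^sup>n\<close> are compared coefficientwise.  Writing \<open>n = d + 2r\<close>,
  the coefficient of \<open>x\<^sup>d\<close> on the right is a single sum over \<open>j = 0..r\<close> of a product of
  a connection coefficient and a coefficient of \<open>l\<^sub>n\<^sub>-\<^sub>2\<^sub>j\<close>; after pulling out
  \<open>s\<^sup>r [n]!/[d]!\<close> the summand \<open>wterm q r N j\<close> (with \<open>N = n + m\<close>) no longer depends on
  \<open>s\<close> or \<open>d\<close>.  This sum equals \<open>[r = 0]\<close>: for \<open>r \<ge> 1\<close> it telescopes, the
  antidifference \<open>wcert\<close> being a Gosper-type certificate whose correctness reduces to the
  three-term identity \<open>[a+c][a+b] = [a][a+b+c] + q\<^sup>a[b][c]\<close> for q-integers.

  Applying a linear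
  functional that is \<open>[n = 0]\<close> on \<open>l\<^sub>n(x,m,-q\<^sup>m,q)\<close> to that expansion keeps only the
  term with \<open>n - 2k = 0\<close>, which gives the moments.
\<close>

lemma qfact_0 [simp]: "qfact q 0 = 1"
  by (simp add: qfact_def)

lemma qfact_Suc: "qfact q (Suc k) = qfact q k * qint q (Suc k)"
  by (simp add: qfact_def prod.cl_ivl_Suc)

lemma qfact_pred: "k \<ge> 1 \<Longrightarrow> qfact q k = qfact q (k - 1) * qint q k"
  by (cases k) (simp_all add: qfact_Suc)

lemma qint_0 [simp]: "qint q 0 = 0"
  by (simp add: qint_def)

lemma choose_two_small [simp]: "0 choose 2 = 0" "Suc 0 choose 2 = 0"
  by (simp_all add: numeral_2_eq_2)

text \<open>The hypothesis \<open>q\<^sup>k \<noteq> 1\<close> for all \<open>k \<ge> 1\<close> makes every \<open>[k]\<close>, \<open>k \<ge> 1\<close>, and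
  every \<open>[k]!\<close> invertible, so that all quotients below are meaningful.\<close>

lemma generic_q_ne_1: "\<forall>k\<ge>1. q ^ k \<noteq> (1::'a::monoid_mult) \<Longrightarrow> q \<noteq> 1"
  by (metis power_one_right order_refl)

lemma qint_nonzero:
  assumes qg: "\<forall>k\<ge>1. q ^ k \<noteq> (1::'a::field)" and "k \<ge> 1"
  shows "qint q k \<noteq> 0"
proof -
  have "q \<noteq> 1" using generic_q_ne_1[OF qg] .
  then show ?thesis using qg assms(2) by (simp add: qint_def)
qed

lemma qfact_nonzero:
  assumes "\<forall>k\<ge>1. q ^ k \<noteq> (1::'a::field)"
  shows "qfact q k \<noteq> 0"
  using qint_nonzero[OF assms] by (simp add: qfact_def prod_zero_iff)

text \<open>The three-term q-integer identity behind the telescoping (for \<open>q = 1\<close> it reads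
  \<open>(a+c)(a+b) = a(a+b+c) + bc\<close>).\<close>

lemma qint_identity:
  assumes "q \<noteq> (1::'a::field)"
  shows "qint q (a + c) * qint q (a + b) = qint q a * qint q (a + b + c) + q ^ a * qint q b * qint q c"
proof -
  have "(1 - q ^ (a + c)) * (1 - q ^ (a + b))
        = (1 - q ^ a) * (1 - q ^ (a + b + c)) + q ^ a * ((1 - q ^ b) * (1 - q ^ c))"
    unfolding power_add by algebra
  then have "(1 - q ^ (a + c)) * (1 - q ^ (a + b)) / (1 - q)^2
        = (1 - q ^ a) * (1 - q ^ (a + b + c)) / (1 - q)^2 + q ^ a * ((1 - q ^ b) * (1 - q ^ c)) / (1 - q)^2"
    by (simp add: add_divide_distrib)
  then show ?thesis
    unfolding qint_def by (simp add: power2_eq_square)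
qed

text \<open>The summand obtained after factoring \<open>s\<^sup>r [n]!/[d]!\<close> out of the coefficient of
  \<open>x\<^sup>d\<close>, \<open>n = d + 2r\<close>, \<open>N = n + m \<ge> 2r\<close>; and its antidifference in \<open>j\<close>.\<close>

definition wterm :: "'a::field \<Rightarrow> nat \<Rightarrow> nat \<Rightarrow> nat \<Rightarrow> 'a" where
  "wterm q r N j = (-1) ^ j * q ^ ((r - j) choose 2) * qfact q (N - 2 * j) * qfact q (N - r - j - 1)
      / (qfact q j * qfact q (r - j) * qfact q (N - j) * qfact q (N - 2 * j - 1))"

definition wcert :: "'a::field \<Rightarrow> nat \<Rightarrow> nat \<Rightarrow> nat \<Rightarrow> 'a" where
  "wcert q r N j = (if j = 0 \<or> r < j then 0 else
      (-1) ^ (j - 1) * q ^ ((r - j + 1) choose 2) * qfact q (N - r - j)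
      / (qfact q (j - 1) * qfact q (r - j) * qfact q (N - j) * qint q r))"

text \<open>With the common factor \<open>F\<close>, the three
  quantities involved are \<open>F [N-2j][r]\<close>, \<open>F [r-j][N-j]\<close> and \<open>-F q\<^sup>r\<^sup>-\<^sup>j [j][N-r-j]\<close>,
  related by \<open>qint_identity\<close> with \<open>a = r-j, b = j, c = N-r-j\<close>.\<close>

lemma wterm_step:
  assumes qg: "\<forall>k\<ge>1. q ^ k \<noteq> (1::'a::field)" and "j < r" and "2 * r \<le> N"
  shows "wterm q r N j = wcert q r N (Suc j) - wcert q r N j"
proof -
  have nzf: "\<And>k. qfact q k \<noteq> 0" using qfact_nonzero[OF qg] .
  have nzi: "\<And>k. k \<ge> 1 \<Longrightarrow> qint q k \<noteq> 0" using qint_nonzero[OF qg] .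
  define F where "F = (-1) ^ j * q ^ ((r - j) choose 2) * qfact q (N - r - j - 1)
      / (qfact q j * qfact q (r - j) * qfact q (N - j) * qint q r)"
  have "wterm q r N j = F * (qint q (N - 2 * j) * qint q r)"
    using assms nzf nzi[of r] qfact_pred[of "N - 2 * j" q]
    by (simp add: wterm_def F_def field_simps)
  moreover have "wcert q r N (Suc j) = F * (qint q (r - j) * qint q (N - j))"
  proof -
    have "wcert q r N (Suc j) = (-1) ^ j * q ^ ((r - j) choose 2) * qfact q (N - r - j - 1)
        / (qfact q j * qfact q (r - j - 1) * qfact q (N - j - 1) * qint q r)"
      using assms by (simp add: wcert_def Suc_diff_Suc)
    moreover have "qfact q (r - j) = qfact q (r - j - 1) * qint q (r - j)"
      "qfact q (N - j) = qfact q (N - j - 1) * qint q (N - j)"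
      using assms by (simp_all add: qfact_pred)
    moreover have "qint q (r - j) \<noteq> 0" "qint q (N - j) \<noteq> 0"
      using assms by (simp_all add: nzi)
    ultimately show ?thesis
      using nzf nzi[of r] assms unfolding F_def by (simp add: field_simps)
  qed
  moreover have "wcert q r N j = - F * (q ^ (r - j) * qint q j * qint q (N - r - j))"
  proof (cases "j = 0")
    case False
    have "wcert q r N j = - ((-1) ^ j) * (q ^ ((r - j) choose 2) * q ^ (r - j)) * qfact q (N - r - j)
        / (qfact q (j - 1) * qfact q (r - j) * qfact q (N - j) * qint q r)"
    proof -
      have "(-1::'a) ^ (j - 1) = - ((-1) ^ j)" using False by (cases j) simp_all
      moreover have "q ^ ((r - j + 1) choose 2) = q ^ ((r - j) choose 2) * q ^ (r - j)"
        by (simp add: numeral_2_eq_2 power_add)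
      ultimately show ?thesis
        using assms False by (simp add: wcert_def)
    qed
    moreover have "qfact q j = qfact q (j - 1) * qint q j"
      "qfact q (N - r - j) = qfact q (N - r - j - 1) * qint q (N - r - j)"
      using assms False by (simp_all add: qfact_pred)
    moreover have "qint q j \<noteq> 0" "qint q (N - r - j) \<noteq> 0"
      using assms False by (simp_all add: nzi)
    ultimately show ?thesis
      using nzf nzi[of r] assms unfolding F_def by (simp add: field_simps)
  qed (simp add: wcert_def)
  moreover have "qint q (N - 2 * j) * qint q r
      = qint q (r - j) * qint q (N - j) + q ^ (r - j) * qint q j * qint q (N - r - j)"
  proof -
    have "q \<noteq> 1" using generic_q_ne_1[OF qg] .
    moreover have "r - j + (N - r - j) = N - 2 * j" "r - j + j = r" "r - j + j + (N - r - j) = N - j"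
      using assms by auto
    ultimately show ?thesis
      using qint_identity[where q=q and a="r - j" and b=j and c="N - r - j"] by simp
  qed
  ultimately show ?thesis by (simp add: algebra_simps)
qed

lemma wterm_last:
  assumes qg: "\<forall>k\<ge>1. q ^ k \<noteq> (1::'a::field)" and "r \<ge> 1"
  shows "wterm q r N r = wcert q r N (Suc r) - wcert q r N r"
proof -
  have "(-1::'a) ^ (r - 1) = - ((-1) ^ r)" using assms(2) by (cases r) simp_all
  moreover have "qfact q r = qfact q (r - 1) * qint q r"
    using assms(2) by (simp add: qfact_pred)
  moreover have "qint q r \<noteq> 0" using qint_nonzero[OF qg assms(2)] .
  ultimately show ?thesis
    using assms qfact_nonzero[OF qg] by (simp add: wterm_def wcert_def field_simps mult_2 mult_2_right)
qed

lemma wterm_sum: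
  assumes qg: "\<forall>k\<ge>1. q ^ k \<noteq> (1::'a::field)" and "2 * r \<le> N"
  shows "(\<Sum>j=0..r. wterm q r N j) = of_bool (r = 0)"
proof (cases "r = 0")
  case True
  then show ?thesis using qfact_nonzero[OF qg] by (simp add: wterm_def)
next
  case False
  have "(\<Sum>j=0..r. wterm q r N j) = (\<Sum>j=0..r. wcert q r N (Suc j) - wcert q r N j)"
  proof (rule sum.cong)
    fix j assume "j \<in> {0..r}"
    then consider "j < r" | "j = r" by fastforce
    then show "wterm q r N j = wcert q r N (Suc j) - wcert q r N j"
      by cases (use wterm_step[OF qg _ assms(2)] wterm_last[OF qg] False in auto)
  qed simp
  also have "\<dots> = wcert q r N (Suc r) - wcert q r N 0"
    by (rule sum_Suc_diff) simp
  also have "\<dots> = 0"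
    by (simp add: wcert_def)
  finally show ?thesis using False by simp
qed

text \<open>The coefficient of \<open>x\<^sup>p\<^sup>-\<^sup>2\<^sup>k\<close> in \<open>l\<^sub>p(x,m,s,q)\<close>; for \<open>p = 0\<close> it gives the constant 1.\<close>

definition lcoef :: "'a::field \<Rightarrow> nat \<Rightarrow> 'a \<Rightarrow> nat \<Rightarrow> nat \<Rightarrow> 'a" where
  "lcoef q m s p k = s ^ k * q ^ (k choose 2) * qfact q p / (qfact q k * qfact q (p - 2 * k))
                     * qfact q (m + p - k - 1) / qfact q (m + p - 1)"

lemma coeff_parity_sum:
  fixes f :: "nat \<Rightarrow> 'a::comm_ring_1"
  shows "coeff (\<Sum>k\<in>{0..p div 2}. smult (f k) (monom 1 (p - 2 * k))) d
     = (if d \<le> p \<and> even (p - d) then f ((p - d) div 2) else 0)"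
proof -
  have "coeff (\<Sum>k\<in>{0..p div 2}. smult (f k) (monom 1 (p - 2 * k))) d
      = (\<Sum>k\<in>{0..p div 2}. if k = (p - d) div 2 \<and> d \<le> p \<and> even (p - d) then f k else 0)"
    unfolding coeff_sum by (intro sum.cong refl) (auto simp: coeff_monom)
  also have "\<dots> = (if d \<le> p \<and> even (p - d) then f ((p - d) div 2) else 0)"
  proof (cases "d \<le> p \<and> even (p - d)")
    case True
    then have "(p - d) div 2 \<in> {0..p div 2}" by auto
    then show ?thesis using True by (simp add: sum.delta')
  qed (auto intro!: sum.neutral)
  finally show ?thesis .
qed

lemma coeff_lpoly:
  assumes qg: "\<forall>k\<ge>1. q ^ k \<noteq> (1::'a::field)"
  shows "coeff (lpoly q m s p) d = (if d \<le> p \<and> even (p - d) then lcoef q m s p ((p - d) div 2) else 0)"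
proof (cases "p = 0")
  case True
  then show ?thesis using qfact_nonzero[OF qg] by (simp add: lpoly_def lcoef_def coeff_monom)
next
  case False
  then have "lpoly q m s p = (\<Sum>k\<in>{0..p div 2}. smult (lcoef q m s p k) (monom 1 (p - 2 * k)))"
    by (simp add: lpoly_def lcoef_def)
  then show ?thesis
    by (simp only: coeff_parity_sum)
qed

definition ccoef :: "'a::field \<Rightarrow> nat \<Rightarrow> 'a \<Rightarrow> nat \<Rightarrow> nat \<Rightarrow> 'a" where
  "ccoef q m s n k = (- s) ^ k * qfact q n / (qfact q k * qfact q (n - 2 * k))
                     * qfact q (n + m - 2 * k) / qfact q (n + m - k)"

lemma ccoef_times_lcoef:
  assumes qg: "\<forall>k\<ge>1. q ^ k \<noteq> (1::'a::field)" and n: "n = d + 2 * r" and "j \<le> r"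
  shows "ccoef q m s n j * lcoef q m s (n - 2 * j) (r - j)
           = s ^ r * qfact q n / qfact q d * wterm q r (n + m) j"
proof -
  have "n - 2 * j - 2 * (r - j) = d" "m + (n - 2 * j) - (r - j) - 1 = n + m - r - j - 1"
     "m + (n - 2 * j) - 1 = n + m - 2 * j - 1" using assms(2,3) by auto
  moreover have "s ^ r = s ^ j * s ^ (r - j)" using assms(3) by (simp add: power_add[symmetric])
  ultimately show ?thesis
    using qfact_nonzero[OF qg] n unfolding ccoef_def lcoef_def wterm_def power_minus[of s]
    by (simp add: field_simps)
qed

lemma coeff_expansion:
  assumes qg: "\<forall>k\<ge>1. q ^ k \<noteq> (1::'a::field)"
  shows "coeff (\<Sum>k\<in>{0..n div 2}. smult (ccoef q m s n k) (lpoly q m s (n - 2 * k))) d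
     = (\<Sum>j\<in>{0..n div 2}. if d \<le> n - 2 * j \<and> even (n - 2 * j - d)
          then ccoef q m s n j * lcoef q m s (n - 2 * j) ((n - 2 * j - d) div 2) else 0)"
  by (simp add: coeff_sum coeff_lpoly[OF qg] if_distrib cong: if_cong)

text \<open>Only the
  terms with \<open>j \<le> r\<close> contribute to \<open>x\<^sup>d\<close>, and they sum to \<open>[d = n]\<close> by \<open>wterm_sum\<close>.\<close>

lemma monomial_expansion:
  assumes qg: "\<forall>k\<ge>1. q ^ k \<noteq> (1::'a::field)"
  shows "monom 1 n = (\<Sum>k\<in>{0..n div 2}. smult (ccoef q m s n k) (lpoly q m s (n - 2 * k)))"
proof (rule poly_eqI)
  fix d
  show "coeff (monom 1 n) d = coeff (\<Sum>k\<in>{0..n div 2}. smult (ccoef q m s n k) (lpoly q m s (n - 2 * k))) d"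
  proof (cases "d \<le> n \<and> even (n - d)")
    case False
    have no_term: "\<not> (d \<le> n - 2 * j \<and> even (n - 2 * j - d))" if "j \<le> n div 2" for j
    proof
      assume j: "d \<le> n - 2 * j \<and> even (n - 2 * j - d)"
      with that have "n - d = (n - 2 * j - d) + 2 * j" by linarith
      then show False using j False by simp
    qed
    show ?thesis
      unfolding coeff_expansion[OF qg] using False no_term by (auto simp: coeff_monom intro!: sum.neutral)
  next
    case True
    then obtain r where n: "n = d + 2 * r" by (metis dvd_def le_add_diff_inverse evenE)
    then have gap: "n - 2 * j - d = 2 * (r - j)" for j by (simp add: diff_mult_distrib2)
    have "coeff (\<Sum>k\<in>{0..n div 2}. smult (ccoef q m s n k) (lpoly q m s (n - 2 * k))) d
        = (\<Sum>j\<in>{0..r}. ccoef q m s n j * lcoef q m s (n - 2 * j) (r - j))"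
      unfolding coeff_expansion[OF qg]
      by (rule sum.mono_neutral_cong_right) (use n gap in auto)
    also have "\<dots> = s ^ r * qfact q n / qfact q d * (\<Sum>j\<in>{0..r}. wterm q r (n + m) j)"
      unfolding sum_distrib_left by (intro sum.cong refl ccoef_times_lcoef[OF qg n]) auto
    also have "\<dots> = coeff (monom 1 n) d"
      using wterm_sum[OF qg, of r "n + m"] n qfact_nonzero[OF qg] by (auto simp: coeff_monom)
    finally show ?thesis by simp
  qed
qed

lemma additive_sum:
  fixes \<Lambda> :: "'b::comm_monoid_add \<Rightarrow> 'c::cancel_comm_monoid_add"
  assumes add: "\<forall>p r. \<Lambda> (p + r) = \<Lambda> p + \<Lambda> r"
  shows "\<Lambda> (\<Sum>k\<in>A. f k) = (\<Sum>k\<in>A. \<Lambda> (f k))"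
proof -
  have zero: "\<Lambda> 0 = 0"
    using add[rule_format, of 0 0] by simp
  show ?thesis
  proof (cases "finite A")
    case True
    then show ?thesis by (induction A rule: finite_induct) (simp_all add: zero add)
  qed (simp add: zero)
qed

lemma functional_moments:
  fixes \<Lambda> :: "'a::field poly \<Rightarrow> 'a"
  assumes qg: "\<forall>k\<ge>1. q ^ k \<noteq> (1::'a)"
    and add: "\<forall>p r. \<Lambda> (p + r) = \<Lambda> p + \<Lambda> r"
    and hom: "\<forall>c p. \<Lambda> (smult c p) = c * \<Lambda> p"
    and normalized: "\<forall>n. \<Lambda> (lpoly q m (- (q ^ m)) n) = of_bool (n = 0)"
  shows "\<Lambda> (monom 1 N) = (if even N then ccoef q m (- (q ^ m)) N (N div 2) else 0)"
proof -
  have "\<Lambda> (monom 1 N) = (\<Sum>j\<in>{0..N div 2}. ccoef q m (- (q ^ m)) N j * of_bool (N - 2 * j = 0))"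
    by (subst monomial_expansion[OF qg, of N m "- (q ^ m)"])
      (simp add: additive_sum[OF add] hom normalized)
  also have "\<dots> = (\<Sum>j\<in>{0..N div 2}. if j = N div 2 \<and> even N then ccoef q m (- (q ^ m)) N j else 0)"
    by (intro sum.cong refl) (auto, presburger)
  also have "\<dots> = (if even N then ccoef q m (- (q ^ m)) N (N div 2) else 0)"
    by (simp add: sum.delta')
  finally show ?thesis .
qed

theorem mainTheorem9:
  fixes q s :: "'a::field_char_0" and m :: nat
  assumes q_generic: "\<forall>k\<ge>1. q ^ k \<noteq> 1"
  shows "(\<forall>n. monom 1 n =
           (\<Sum>k\<in>{0..n div 2}.
              smult ((- s) ^ k * qfact q n / (qfact q k * qfact q (n - 2 * k))
                     * qfact q (n + m - 2 * k) / qfact q (n + m - k))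
                    (lpoly q m s (n - 2 * k))))
       \<and> (\<forall>\<Lambda> :: 'a poly \<Rightarrow> 'a.
            (\<forall>p r. \<Lambda> (p + r) = \<Lambda> p + \<Lambda> r) \<longrightarrow>
            (\<forall>c p. \<Lambda> (smult c p) = c * \<Lambda> p) \<longrightarrow>
            (\<forall>n. \<Lambda> (lpoly q m (- (q ^ m)) n) = of_bool (n = 0)) \<longrightarrow>
            (\<forall>n. \<Lambda> (monom 1 (2 * n + 1)) = 0 \<and>
                 \<Lambda> (monom 1 (2 * n)) =
                   q ^ (m * n) * (qfact q (2 * n) * qfact q m) / (qfact q n * qfact q (m + n))))"
proof (intro conjI allI impI)
  fix n
  show "monom 1 n =
           (\<Sum>k\<in>{0..n div 2}.
              smult ((- s) ^ k * qfact q n / (qfact q k * qfact q (n - 2 * k))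
                     * qfact q (n + m - 2 * k) / qfact q (n + m - k))
                    (lpoly q m s (n - 2 * k)))"
    using monomial_expansion[OF q_generic, of n m s] by (simp add: ccoef_def)
next
  fix \<Lambda> :: "'a poly \<Rightarrow> 'a" and n
  assume "\<forall>p r. \<Lambda> (p + r) = \<Lambda> p + \<Lambda> r" "\<forall>c p. \<Lambda> (smult c p) = c * \<Lambda> p"
    "\<forall>n. \<Lambda> (lpoly q m (- (q ^ m)) n) = of_bool (n = 0)"
  note moments = functional_moments[OF q_generic this]
  show "\<Lambda> (monom 1 (2 * n + 1)) = 0"
    using moments[of "2 * n + 1"] by simp
  have "2 * n + m - 2 * n = m" "2 * n + m - n = m + n" by simp_all
  then show "\<Lambda> (monom 1 (2 * n)) = q ^ (m * n) * (qfact q (2 * n) * qfact q m) / (qfact q n * qfact q (m + n))"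
    using moments[of "2 * n"] by (simp add: ccoef_def power_mult ac_simps)
qed

end
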